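(* Let $d\ge2$ and let $\mathbf{p}^\star=(1,p_2^\star,\dots,p_d^\star)$ be a maximizer of the problem $$\max\Big\{\frac{\prod_{i=1}^dp_i}{D_1(\mathbf{p})^d}\;:\;\mathbf{p}\in(0,\infty)^d,\ p_1=1,\ D_1(\mathbf{p})^2\ge D_j(\mathbf{p})^2\text{ for all }j\in\{2,\dots,d\}\Big\}.$$ Then there exists a unique $k\in\{2,\dots,d\}$ such that $D_k(\mathbf{p}^\star)=D_1(\mathbf{p}^\star)=D(\mathbf{p}^\star)$, and, writing $D_k=D_k(\mathbf{p}^\star)$, $$p_j^\star=\begin{cases}\dfrac{\sqrt2\,D_k}{(j-1)\sqrt{dk}}\sqrt{\dfrac{2k-1}{k-1}}, & j\in\{2,\dots,k-1\},\\[2mm] \dfrac{D_k}{\sqrt{dk}}, & j=k,\\[2mm] \dfrac{D_k}{(j-1)\sqrt d}, & j\in\{k+1,\dots,d\}.\end{cases}$$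
   Context: For $k\in\{1,\dots,d\}$ let $w_{k,i}=0$ for $i<k$, $w_{k,k}=k$, $w_{k,i}=i-1$ for $k<i\le d$, $D_k(\mathbf{p})=\sqrt{\sum_{i=1}^dw_{k,i}^2p_i^2}$, and $D(\mathbf{p})=\max_{k\in\{1,\dots,d\}}D_k(\mathbf{p})$. *)

theory Defs
  imports Complex_Main
begin

text \<open>Vectors p in (0,inf)^d are represented as functions nat => real, indices 1..d.\<close>

definition wt :: "nat \<Rightarrow> nat \<Rightarrow> real" where
  "wt k i = (if i < k then 0 else if i = k then real k else real i - 1)"

definition Dk :: "nat \<Rightarrow> (nat \<Rightarrow> real) \<Rightarrow> nat \<Rightarrow> real" where
  "Dk d p k = sqrt (\<Sum>i=1..d. (wt k i)^2 * (p i)^2)"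

definition Dmax :: "nat \<Rightarrow> (nat \<Rightarrow> real) \<Rightarrow> real" where
  "Dmax d p = Max ((Dk d p) ` {1..d})"

definition feasible :: "nat \<Rightarrow> (nat \<Rightarrow> real) \<Rightarrow> bool" where
  "feasible d p \<longleftrightarrow> (\<forall>i\<in>{1..d}. p i > 0) \<and> p 1 = 1 \<and>
     (\<forall>j\<in>{2..d}. (Dk d p 1)^2 \<ge> (Dk d p j)^2)"

definition objective :: "nat \<Rightarrow> (nat \<Rightarrow> real) \<Rightarrow> real" where
  "objective d p = (\<Prod>i=1..d. p i) / (Dk d p 1) ^ d"

end

theory Submission
  imports Defs
begin

text \<open>Write \<open>a = p\<^sub>2\<^sup>2\<close> and \<open>y\<^sub>i = (i - 1)\<^sup>2 p\<^sub>i\<^sup>2\<close> for \<open>i \<ge> 3\<close>, so that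
  \<open>D\<^sub>1\<^sup>2 = 1 + a + \<Sum> y\<^sub>i\<close> and \<open>D\<^sub>2\<^sup>2 = 4a + \<Sum> y\<^sub>i\<close>; the constraint \<open>D\<^sub>2 \<le> D\<^sub>1\<close> reads \<open>3a \<le> 1\<close>,
  which gives \<open>2u \<le> 1 + a\<close> for \<open>u = 2\<surd>(a/3)\<close>. AM-GM applied to the \<open>d\<close> numbers
  \<open>u, u, y\<^sub>3, \<dots>, y\<^sub>d\<close> yields \<open>(4a/3) \<Prod> y\<^sub>i \<le> (D\<^sub>1\<^sup>2/d)\<^sup>d\<close>, a bound on the squared objective
  which is attained exactly at the balanced point \<open>a = 1/3\<close>, \<open>y\<^sub>i = 2/3\<close>. There
  \<open>D\<^sub>1 = D\<^sub>2 = \<surd>(2d/3)\<close> while \<open>D\<^sub>j < D\<^sub>1\<close> for \<open>j \<ge> 3\<close>, so \<open>k = 2\<close> and the claimed formulas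
  reduce to \<open>p\<^sub>2 = 1/\<surd>3\<close>, \<open>p\<^sub>j = \<surd>(2/3)/(j - 1)\<close>.\<close>

lemma Dk_nonneg: "0 \<le> Dk d p k"
  unfolding Dk_def by (intro real_sqrt_ge_zero sum_nonneg) auto

lemma Dk_sq:
  assumes "1 \<le> j" "j \<le> d"
  shows "(Dk d p j)^2 = (real j)^2 * (p j)^2 + (\<Sum>i\<in>{j<..d}. (real i - 1)^2 * (p i)^2)"
proof -
  have split: "{1..d} = {1..<j} \<union> insert j {j<..d}" using assms by auto
  have "(\<Sum>i=1..d. (wt j i)^2 * (p i)^2)
      = (\<Sum>i\<in>{1..<j}. (wt j i)^2 * (p i)^2) + (\<Sum>i\<in>insert j {j<..d}. (wt j i)^2 * (p i)^2)"
    unfolding split by (rule sum.union_disjoint) auto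
  also have "(\<Sum>i\<in>{1..<j}. (wt j i)^2 * (p i)^2) = 0"
    by (intro sum.neutral) (auto simp: wt_def)
  also have "(\<Sum>i\<in>insert j {j<..d}. (wt j i)^2 * (p i)^2)
      = (real j)^2 * (p j)^2 + (\<Sum>i\<in>{j<..d}. (real i - 1)^2 * (p i)^2)"
    by (simp add: wt_def)
  finally show ?thesis
    unfolding Dk_def by (simp add: sum_nonneg)
qed

lemma Dk_1_sq:
  assumes "2 \<le> d"
  shows "(Dk d p 1)^2 = (p 1)^2 + (p 2)^2 + (\<Sum>i\<in>{2<..d}. (real i - 1)^2 * (p i)^2)"
proof -
  have "{1<..d} = insert 2 {2<..d}" using assms by auto
  then show ?thesis using Dk_sq[of 1 d p] assms by simp
qed

lemma Dk_2_sq: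
  assumes "2 \<le> d"
  shows "(Dk d p 2)^2 = 4 * (p 2)^2 + (\<Sum>i\<in>{2<..d}. (real i - 1)^2 * (p i)^2)"
  using Dk_sq[of 2 d p] assms by simp

lemma objective_sq:
  assumes "2 \<le> d" "p 1 = 1"
  shows "(objective d p)^2 * (\<Prod>i\<in>{2<..d}. (real i - 1)^2)
     = (p 2)^2 * (\<Prod>i\<in>{2<..d}. (real i - 1)^2 * (p i)^2) / ((Dk d p 1)^2)^d"
proof -
  have "{1..d} = insert 1 (insert 2 {2<..d})" using assms(1) by auto
  then have "(\<Prod>i=1..d. p i) = p 2 * (\<Prod>i\<in>{2<..d}. p i)"
    using assms(2) by simp
  then have "(objective d p)^2 = (p 2)^2 * (\<Prod>i\<in>{2<..d}. (p i)^2) / ((Dk d p 1)^2)^d"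
    unfolding objective_def
    by (simp add: power_divide power_mult_distrib prod_power_distrib power_mult[symmetric] mult.commute)
  then show ?thesis by (simp add: prod.distrib)
qed

text \<open>The proof applies \<open>ln x \<le> x - 1\<close> (with equality only at \<open>x = 1\<close>) to each \<open>y\<^sub>i / mean\<close>.\<close>

lemma prod_le_mean_power:
  fixes y :: "'a \<Rightarrow> real"
  assumes fin: "finite A" "A \<noteq> {}" and pos: "\<forall>i\<in>A. y i > 0"
  shows "(\<Prod>i\<in>A. y i) \<le> ((\<Sum>i\<in>A. y i) / card A) ^ card A"
    and "(\<Prod>i\<in>A. y i) = ((\<Sum>i\<in>A. y i) / card A) ^ card A \<Longrightarrow> \<forall>i\<in>A. y i = (\<Sum>i\<in>A. y i) / card A"
proof -
  define m where "m = (\<Sum>i\<in>A. y i) / card A"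
  have n: "card A > 0" using fin by (simp add: card_gt_0_iff)
  have sum_pos: "(\<Sum>i\<in>A. y i) > 0" using fin pos by (intro sum_pos) auto
  then have m: "m > 0" using n by (simp add: m_def)
  define g where "g i = y i / m - 1 - ln (y i / m)" for i
  have g_nonneg: "\<forall>i\<in>A. g i \<ge> 0" using pos m ln_le_minus_one[of "y _ / m"] by (auto simp: g_def)
  have ln_prod: "ln (\<Prod>i\<in>A. y i) = (\<Sum>i\<in>A. ln (y i))" using fin pos by (intro ln_prod) auto
  have "(\<Sum>i\<in>A. g i) = (\<Sum>i\<in>A. y i) / m - card A - ((\<Sum>i\<in>A. ln (y i)) - card A * ln m)"
    using pos m by (simp add: g_def sum_subtractf sum_divide_distrib[symmetric] ln_divide_pos)
  also have "(\<Sum>i\<in>A. y i) / m = card A" using m n sum_pos by (simp add: m_def)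
  finally have sum_g: "(\<Sum>i\<in>A. g i) = ln (m ^ card A) - ln (\<Prod>i\<in>A. y i)"
    using ln_prod m by (simp add: ln_realpow)
  have prod_pos: "(\<Prod>i\<in>A. y i) > 0" using pos by (intro prod_pos) auto
  have "ln (\<Prod>i\<in>A. y i) \<le> ln (m ^ card A)" using sum_g sum_nonneg[of A g] g_nonneg by simp
  then show "(\<Prod>i\<in>A. y i) \<le> ((\<Sum>i\<in>A. y i) / card A) ^ card A"
    using prod_pos m by (simp add: m_def[symmetric])
  assume "(\<Prod>i\<in>A. y i) = ((\<Sum>i\<in>A. y i) / card A) ^ card A"
  then have "(\<Sum>i\<in>A. g i) = 0" using sum_g by (simp add: m_def[symmetric])
  then have "\<forall>i\<in>A. g i = 0" using sum_nonneg_eq_0_iff[of A g] fin g_nonneg by auto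
  then have "\<forall>i\<in>A. y i / m = 1" using pos m ln_eq_minus_one[of "y _ / m"] by (auto simp: g_def)
  then show "\<forall>i\<in>A. y i = (\<Sum>i\<in>A. y i) / card A" using m by (simp add: m_def[symmetric])
qed

lemma four_sqrt_third_le:
  fixes a :: real
  assumes "0 \<le> a" "3 * a \<le> 1"
  shows "4 * sqrt (a / 3) \<le> 1 + a"
    and "4 * sqrt (a / 3) = 1 + a \<Longrightarrow> a = 1 / 3"
proof -
  have gap: "(1 + a)^2 - (4 * sqrt (a / 3))^2 = (1 - 3 * a) * (3 - a) / 3"
    using assms(1) by (simp add: power_mult_distrib power2_eq_square algebra_simps)
  have "0 \<le> (1 - 3 * a) * (3 - a)" using assms by (intro mult_nonneg_nonneg) auto
  then have "(4 * sqrt (a / 3))^2 \<le> (1 + a)^2" using gap by linarith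
  then show "4 * sqrt (a / 3) \<le> 1 + a"
    by (rule power2_le_imp_le) (use assms in simp)
  assume "4 * sqrt (a / 3) = 1 + a"
  then have "(1 - 3 * a) * (3 - a) = 0" using gap by simp
  then show "a = 1 / 3" using assms(2) by simp
qed

definition balanced :: "nat \<Rightarrow> (nat \<Rightarrow> real) \<Rightarrow> bool" where
  "balanced d p \<longleftrightarrow> p 1 = 1 \<and> (p 2)^2 = 1/3 \<and> (\<forall>i\<in>{2<..d}. (real i - 1)^2 * (p i)^2 = 2/3)"

lemma balanced_Dk_sq:
  assumes d: "2 \<le> d" and bal: "balanced d p"
  shows "(Dk d p 1)^2 = 2 * real d / 3" "(Dk d p 2)^2 = 2 * real d / 3"
    and "j \<in> {3..d} \<Longrightarrow> (Dk d p j)^2 < 2 * real d / 3"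
proof -
  have y: "(real i - 1)^2 * (p i)^2 = 2/3" if "i \<in> {2<..d}" for i
    using bal that by (simp add: balanced_def)
  have tail: "(\<Sum>i\<in>{j<..d}. (real i - 1)^2 * (p i)^2) = (real d - real j) * (2/3)"
    if "2 \<le> j" "j \<le> d" for j
  proof -
    have "(\<Sum>i\<in>{j<..d}. (real i - 1)^2 * (p i)^2) = (\<Sum>i\<in>{j<..d}. 2/3)"
      by (rule sum.cong[OF refl], rule y) (use that in auto)
    then show ?thesis using that by (simp add: of_nat_diff)
  qed
  show "(Dk d p 1)^2 = 2 * real d / 3" "(Dk d p 2)^2 = 2 * real d / 3"
    using Dk_1_sq[OF d, of p] Dk_2_sq[OF d, of p] d tail[of 2] bal
    by (simp_all add: balanced_def field_simps)
  assume "j \<in> {3..d}"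
  then have j: "3 \<le> j" "j \<le> d" by auto
  have jm1: "(real j - 1)^2 > 0" using j by simp
  have "real j < (real j - 1)^2"
  proof -
    have "(real j - 1)^2 - real j = real j * (real j - 3) + 1" by (simp add: power2_eq_square algebra_simps)
    moreover have "real j * (real j - 3) \<ge> 0" using j by simp
    ultimately show ?thesis by linarith
  qed
  have "(p j)^2 = (2/3) / (real j - 1)^2" using y[of j] j jm1 by (simp add: field_simps)
  then have "(real j)^2 * (p j)^2 = real j * (real j / (real j - 1)^2) * (2/3)"
    by (simp add: power2_eq_square)
  also have "\<dots> < real j * 1 * (2/3)"
    using \<open>real j < (real j - 1)^2\<close> jm1 j by (intro mult_strict_right_mono mult_strict_left_mono) auto
  finally show "(Dk d p j)^2 < 2 * real d / 3"
    using Dk_sq[of j d p] j tail[of j] by (simp add: field_simps)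
qed

lemma balanced_imp_feasible:
  assumes d: "2 \<le> d" and bal: "balanced d p" and pos: "\<forall>i\<in>{1..d}. p i > 0"
  shows "feasible d p"
proof -
  have "(Dk d p j)^2 \<le> (Dk d p 1)^2" if "j \<in> {2..d}" for j
  proof (cases "j = 2")
    case False
    then have "j \<in> {3..d}" using that by auto
    then show ?thesis using balanced_Dk_sq[OF d bal] by fastforce
  qed (use balanced_Dk_sq(1,2)[OF d bal] in simp)
  then show ?thesis using bal pos by (simp add: feasible_def balanced_def)
qed

lemma balanced_objective_sq:
  assumes d: "2 \<le> d" and bal: "balanced d p"
  shows "(objective d p)^2 * (\<Prod>i\<in>{2<..d}. (real i - 1)^2) = 3 / (4 * real d ^ d)"
proof -
  have p1: "p 1 = 1" and p2: "(p 2)^2 = 1/3" using bal by (simp_all add: balanced_def)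
  have "(\<Prod>i\<in>{2<..d}. (real i - 1)^2 * (p i)^2) = (\<Prod>i\<in>{2<..d}. 2/3)"
    using bal by (intro prod.cong) (auto simp: balanced_def)
  then have prod: "(\<Prod>i\<in>{2<..d}. (real i - 1)^2 * (p i)^2) = (2/3)^(d-2)" by simp
  have "(2/3::real)^d = (2/3)^(d-2) * (2/3)^2"
    using d by (metis le_add_diff_inverse2 power_add)
  moreover have "(2 * real d / 3)^d = (2/3)^d * real d ^ d"
    by (simp add: power_mult_distrib[symmetric])
  ultimately have D1_pow: "(2 * real d / 3)^d = (2/3)^(d-2) * (4/9) * real d ^ d"
    by (simp add: power2_eq_square)
  have "(objective d p)^2 * (\<Prod>i\<in>{2<..d}. (real i - 1)^2) = 1/3 * (2/3)^(d-2) / (2 * real d / 3)^d"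
    by (simp only: objective_sq[of d p, OF d p1] balanced_Dk_sq(1)[OF d bal] prod p2)
  also have "\<dots> = 3 / (4 * real d ^ d)"
    using D1_pow d by (simp add: field_simps)
  finally show ?thesis .
qed

lemma feasible_weighted_prod_le:
  assumes d: "2 \<le> d" and f: "feasible d p"
  defines "P \<equiv> \<Prod>i\<in>{2<..d}. (real i - 1)^2 * (p i)^2"
  shows "4/3 * (p 2)^2 * P \<le> ((Dk d p 1)^2 / d)^d"
    and "4/3 * (p 2)^2 * P = ((Dk d p 1)^2 / d)^d \<Longrightarrow> balanced d p"
proof -
  have p1: "p 1 = 1" and pos: "\<forall>i\<in>{1..d}. p i > 0"
    and con: "(Dk d p 2)^2 \<le> (Dk d p 1)^2"
    using f d by (auto simp: feasible_def)
  have "p 2 > 0" using pos d by simp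
  define a where "a = (p 2)^2"
  define R where "R = (\<Sum>i\<in>{2<..d}. (real i - 1)^2 * (p i)^2)"
  define u where "u = 2 * sqrt (a / 3)"
  have S: "(Dk d p 1)^2 = 1 + a + R" using Dk_1_sq[OF d, of p] p1 by (simp add: a_def R_def)
  have a: "0 < a" "3 * a \<le> 1"
    using con \<open>p 2 > 0\<close> Dk_1_sq[OF d, of p] Dk_2_sq[OF d, of p] p1 by (auto simp: a_def)
  have u: "0 < u" "u^2 = 4/3 * a" "2 * u \<le> 1 + a"
    using a four_sqrt_third_le(1)[of a] by (auto simp: u_def power_mult_distrib)
  have R: "0 \<le> R" unfolding R_def by (intro sum_nonneg) auto
  define y where "y i = (if i \<le> 2 then u else (real i - 1)^2 * (p i)^2)" for i
  have split: "{1..d} = insert 1 (insert 2 {2<..d})" using d by auto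
  have y_pos: "\<forall>i\<in>{1..d}. y i > 0" using pos u by (auto simp: y_def)
  have "(\<Sum>i\<in>{2<..d}. y i) = R" unfolding R_def by (intro sum.cong) (auto simp: y_def)
  then have y_sum: "(\<Sum>i\<in>{1..d}. y i) = 2 * u + R" unfolding split by (simp add: y_def)
  have "(\<Prod>i\<in>{2<..d}. y i) = P" unfolding P_def by (intro prod.cong) (auto simp: y_def)
  then have y_prod: "(\<Prod>i\<in>{1..d}. y i) = 4/3 * a * P"
    unfolding split using u(2) by (simp add: y_def power2_eq_square)
  have ne: "{1..d} \<noteq> {}" using d by auto
  note amgm = prod_le_mean_power[of "{1..d}" y, OF _ ne y_pos, unfolded y_sum y_prod card_atLeastAtMost]
  have mean_le: "((2 * u + R) / d)^d \<le> ((Dk d p 1)^2 / d)^d"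
    using S u R by (intro power_mono divide_right_mono) auto
  show "4/3 * (p 2)^2 * P \<le> ((Dk d p 1)^2 / d)^d"
    using amgm(1) mean_le by (simp add: a_def)
  assume eq: "4/3 * (p 2)^2 * P = ((Dk d p 1)^2 / d)^d"
  then have "4/3 * a * P = ((2 * u + R) / d)^d" and "((2 * u + R) / d)^d = ((Dk d p 1)^2 / d)^d"
    using amgm(1) mean_le by (simp_all add: a_def)
  then have y_mean: "\<forall>i\<in>{1..d}. y i = (2 * u + R) / d"
    and "(2 * u + R) / d = (Dk d p 1)^2 / d"
    using amgm(2) power_eq_imp_eq_base[of "(2 * u + R) / d" d "(Dk d p 1)^2 / d"] u R d by auto
  then have "2 * u = 1 + a" using S d by simp
  then have a3: "a = 1/3" using a four_sqrt_third_le(2)[of a] by (simp add: u_def)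
  then have "u = 2/3" using \<open>2 * u = 1 + a\<close> by simp
  moreover have "y 1 = u" "\<forall>i\<in>{2<..d}. y i = (real i - 1)^2 * (p i)^2" by (auto simp: y_def)
  ultimately show "balanced d p"
    using y_mean p1 a3 d by (auto simp: balanced_def a_def)
qed

lemma feasible_objective_sq_le:
  assumes d: "2 \<le> d" and f: "feasible d p"
  shows "(objective d p)^2 * (\<Prod>i\<in>{2<..d}. (real i - 1)^2) \<le> 3 / (4 * real d ^ d)"
    and "(objective d p)^2 * (\<Prod>i\<in>{2<..d}. (real i - 1)^2) = 3 / (4 * real d ^ d) \<Longrightarrow> balanced d p"
proof -
  define P where "P = (\<Prod>i\<in>{2<..d}. (real i - 1)^2 * (p i)^2)"
  define S where "S = (Dk d p 1)^2"
  have "S \<ge> 1" using Dk_1_sq[OF d, of p] f by (simp add: S_def feasible_def sum_nonneg)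
  then have "S > 0" and Sd: "S^d > 0" by simp_all
  have dd: "real d ^ d > 0" using d by simp
  have obj: "(objective d p)^2 * (\<Prod>i\<in>{2<..d}. (real i - 1)^2) = (p 2)^2 * P / S^d"
    using objective_sq[OF d, of p] f by (simp add: feasible_def P_def S_def)
  have iff: "(p 2)^2 * P / S^d \<le> 3 / (4 * real d ^ d) \<longleftrightarrow> 4/3 * (p 2)^2 * P \<le> (S / d)^d"
    and iff_eq: "(p 2)^2 * P / S^d = 3 / (4 * real d ^ d) \<longleftrightarrow> 4/3 * (p 2)^2 * P = (S / d)^d"
    using \<open>S > 0\<close> Sd dd by (auto simp: power_divide field_simps)
  show "(objective d p)^2 * (\<Prod>i\<in>{2<..d}. (real i - 1)^2) \<le> 3 / (4 * real d ^ d)"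
    unfolding obj iff using feasible_weighted_prod_le(1)[OF d f] by (simp add: P_def S_def)
  show "(objective d p)^2 * (\<Prod>i\<in>{2<..d}. (real i - 1)^2) = 3 / (4 * real d ^ d) \<Longrightarrow> balanced d p"
    unfolding obj iff_eq using feasible_weighted_prod_le(2)[OF d f] by (simp add: P_def S_def)
qed

lemma optimal_imp_balanced:
  assumes d: "2 \<le> d" and f: "feasible d p"
    and opt: "\<forall>q. feasible d q \<longrightarrow> objective d q \<le> objective d p"
  shows "balanced d p"
proof -
  define q where "q i = (if i = 1 then 1 else if i = 2 then 1 / sqrt 3 else sqrt (2/3) / (real i - 1))"
    for i :: nat
  have q_bal: "balanced d q" by (auto simp: balanced_def q_def power_divide)
  have "feasible d q" by (rule balanced_imp_feasible[OF d q_bal]) (auto simp: q_def)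
  have "0 \<le> objective d q" using \<open>feasible d q\<close>
    unfolding objective_def feasible_def by (intro divide_nonneg_nonneg prod_nonneg zero_le_power Dk_nonneg) (auto simp: less_imp_le)
  then have "(objective d q)^2 \<le> (objective d p)^2"
    using opt \<open>feasible d q\<close> by (intro power_mono) auto
  then have "3 / (4 * real d ^ d) \<le> (objective d p)^2 * (\<Prod>i\<in>{2<..d}. (real i - 1)^2)"
    unfolding balanced_objective_sq[OF d q_bal, symmetric]
    by (intro mult_right_mono prod_nonneg) auto
  then show ?thesis
    using feasible_objective_sq_le[OF d f] by linarith
qed

lemma balanced_Dk:
  assumes d: "2 \<le> d" and bal: "balanced d p"
  shows "Dk d p 1 = sqrt (2 * real d / 3)" "Dk d p 2 = sqrt (2 * real d / 3)"
    and "j \<in> {3..d} \<Longrightarrow> Dk d p j < Dk d p 1"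
proof -
  note sq = balanced_Dk_sq[OF d bal]
  show "Dk d p 1 = sqrt (2 * real d / 3)" "Dk d p 2 = sqrt (2 * real d / 3)"
    using sq(1,2) by (auto intro!: real_sqrt_unique[symmetric] Dk_nonneg)
  show "j \<in> {3..d} \<Longrightarrow> Dk d p j < Dk d p 1"
    using sq(1,3) Dk_nonneg[of d p 1] by (metis power_less_imp_less_base)
qed

lemma balanced_Dmax:
  assumes d: "2 \<le> d" and bal: "balanced d p"
  shows "Dmax d p = Dk d p 1"
  unfolding Dmax_def
proof (rule Max_eqI)
  show "Dk d p 1 \<in> Dk d p ` {1..d}" using d by auto
  fix y assume "y \<in> Dk d p ` {1..d}"
  then obtain j where "j \<in> {1..d}" "y = Dk d p j" by auto
  then consider "j = 1" | "j = 2" | "j \<in> {3..d}" by fastforce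
  then show "y \<le> Dk d p 1"
    using balanced_Dk[OF d bal] \<open>y = Dk d p j\<close> by cases (auto simp: less_imp_le)
qed simp

lemma balanced_coordinates:
  assumes d: "2 \<le> d" and bal: "balanced d p" and pos: "\<forall>i\<in>{1..d}. p i > 0"
  shows "p 2 = Dk d p 2 / sqrt (real d * 2)"
    and "j \<in> {2<..d} \<Longrightarrow> p j = Dk d p 2 / ((real j - 1) * sqrt (real d))"
proof -
  have dp: "real d > 0" using d by simp
  have "Dk d p 2 / sqrt (real d * 2) = sqrt ((2 * real d / 3) / (real d * 2))"
    by (simp only: balanced_Dk(2)[OF d bal] real_sqrt_divide)
  also have "(2 * real d / 3) / (real d * 2) = 1/3" using dp by simp
  also have "sqrt (1/3) = p 2"
    using bal pos d by (intro real_sqrt_unique) (auto simp: balanced_def less_imp_le)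
  finally show "p 2 = Dk d p 2 / sqrt (real d * 2)" ..
  assume j: "j \<in> {2<..d}"
  then have "((real j - 1) * p j)^2 = 2/3" and "0 \<le> (real j - 1) * p j"
    using bal pos by (auto simp: balanced_def power_mult_distrib less_imp_le)
  then have "(real j - 1) * p j = sqrt ((2 * real d / 3) / real d)"
    using dp by (simp add: real_sqrt_unique)
  also have "\<dots> = Dk d p 2 / sqrt (real d)"
    by (simp only: balanced_Dk(2)[OF d bal] real_sqrt_divide)
  finally show "p j = Dk d p 2 / ((real j - 1) * sqrt (real d))"
    using j by (simp add: field_simps)
qed

theorem corollary1:
  fixes d :: nat and p :: "nat \<Rightarrow> real"
  assumes "d \<ge> 2"
    and "feasible d p"
    and "\<forall>q. feasible d q \<longrightarrow> objective d q \<le> objective d p"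
  shows "(\<exists>!k. k \<in> {2..d} \<and> Dk d p k = Dk d p 1 \<and> Dk d p 1 = Dmax d p) \<and>
    (\<forall>k\<in>{2..d}. Dk d p k = Dk d p 1 \<and> Dk d p 1 = Dmax d p \<longrightarrow>
      (\<forall>j\<in>{2..d}. p j =
        (if j < k then sqrt 2 * Dk d p k / ((real j - 1) * sqrt (real d * real k))
                        * sqrt ((2 * real k - 1) / (real k - 1))
         else if j = k then Dk d p k / sqrt (real d * real k)
         else Dk d p k / ((real j - 1) * sqrt (real d)))))"
proof -
  have d: "2 \<le> d" and pos: "\<forall>i\<in>{1..d}. p i > 0" using assms by (auto simp: feasible_def)
  have bal: "balanced d p" using optimal_imp_balanced assms by blast
  note D = balanced_Dk[OF d bal] and coords = balanced_coordinates[OF d bal pos]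
  have only_2: "k = 2" if "k \<in> {2..d}" "Dk d p k = Dk d p 1" for k
    using that D(3)[of k] by force
  have "2 \<in> {2..d} \<and> Dk d p 2 = Dk d p 1 \<and> Dk d p 1 = Dmax d p"
    using d D balanced_Dmax[OF d bal] by simp
  then have "\<exists>!k. k \<in> {2..d} \<and> Dk d p k = Dk d p 1 \<and> Dk d p 1 = Dmax d p"
    using only_2 by blast
  moreover have "p j = (if j < k then sqrt 2 * Dk d p k / ((real j - 1) * sqrt (real d * real k))
                        * sqrt ((2 * real k - 1) / (real k - 1))
         else if j = k then Dk d p k / sqrt (real d * real k)
         else Dk d p k / ((real j - 1) * sqrt (real d)))"
    if "k \<in> {2..d}" "Dk d p k = Dk d p 1" "j \<in> {2..d}" for k j
  proof -
    have "k = 2" using only_2 that by blast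
    then show ?thesis using coords that by (cases "j = 2") auto
  qed
  ultimately show ?thesis by blast
qed

end
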